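(* Let $(K,D,v)$ be a VD-field such that $(K,v)$ is spherically complete, and assume that the map $D$ induced on the residue field $Kv$ is surjective. Then $D$ is surjective on $K$.
   Context: A VD-field is a valued field $(K,v)$ (valuation ring $\mathcal{O}$, residue field $Kv$, value group $vK$) with an additive map $D:K\to K$ such that: $vDa\ge va$ for all $a\in K$; $vK=\{va\mid a\in K,\ vDa>va\}$; there is $e\in\mathcal{O}$ with $D(ab)=aDb+bDa+e(Da)(Db)$ for all $a,b\in K$. The induced map on $Kv$ is $D(av)=(Da)v$ for $a\in\mathcal{O}$. $(K,v)$ is spherically complete if in the ultrametric space $u(a,b)=v(a-b)$ every nest (family totally ordered by inclusion) of balls has non-empty intersection. *)

theory Defs
  imports Main
begin

text \<open>The value of 0 is infinity; we model this by only constraining v on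
nonzero elements and using the comparison predicates below, which treat
v 0 as +infinity.\<close>

definition valuation :: "('a::field \<Rightarrow> 'g::linordered_ab_group_add) \<Rightarrow> bool" where
  "valuation v \<longleftrightarrow>
     (\<forall>a b. a \<noteq> 0 \<longrightarrow> b \<noteq> 0 \<longrightarrow> v (a * b) = v a + v b) \<and>
     (\<forall>a b. a \<noteq> 0 \<longrightarrow> b \<noteq> 0 \<longrightarrow> a + b \<noteq> 0 \<longrightarrow> min (v a) (v b) \<le> v (a + b))"

definition val_ge :: "('a::field \<Rightarrow> 'g::linorder) \<Rightarrow> 'a \<Rightarrow> 'a \<Rightarrow> bool" where
  "val_ge v a b \<longleftrightarrow> a = 0 \<or> (b \<noteq> 0 \<and> v b \<le> v a)"

definition val_gt :: "('a::field \<Rightarrow> 'g::linorder) \<Rightarrow> 'a \<Rightarrow> 'a \<Rightarrow> bool" where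
  "val_gt v a b \<longleftrightarrow> b \<noteq> 0 \<and> (a = 0 \<or> v b < v a)"

definition val_ring :: "('a::field \<Rightarrow> 'g::linorder) \<Rightarrow> 'a set" where
  "val_ring v = {a. val_ge v a 1}"

text \<open>Residue map: a v = b v for a, b in O iff v (a - b) > 0.\<close>
definition same_residue :: "('a::field \<Rightarrow> 'g::linorder) \<Rightarrow> 'a \<Rightarrow> 'a \<Rightarrow> bool" where
  "same_residue v a b \<longleftrightarrow> val_gt v (a - b) 1"

definition VD_field :: "('a::field \<Rightarrow> 'g::linordered_ab_group_add) \<Rightarrow> ('a \<Rightarrow> 'a) \<Rightarrow> bool" where
  "VD_field v D \<longleftrightarrow>
     valuation v \<and>
     (\<forall>a b. D (a + b) = D a + D b) \<and>
     (\<forall>a. val_ge v (D a) a) \<and>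
     (v ` {a. a \<noteq> 0} = v ` {a. a \<noteq> 0 \<and> val_gt v (D a) a}) \<and>
     (\<exists>e \<in> val_ring v. \<forall>a b. D (a * b) = a * D b + b * D a + e * D a * D b)"

text \<open>Surjectivity of the induced map on Kv: every residue class b v (b in O)
is of the form D(a v) = (D a) v for some a in O.\<close>
definition residue_D_surj :: "('a::field \<Rightarrow> 'g::linorder) \<Rightarrow> ('a \<Rightarrow> 'a) \<Rightarrow> bool" where
  "residue_D_surj v D \<longleftrightarrow>
     (\<forall>b \<in> val_ring v. \<exists>a \<in> val_ring v. same_residue v (D a) b)"

definition uball :: "('a::field \<Rightarrow> 'g::linorder) \<Rightarrow> 'a \<Rightarrow> 'a \<Rightarrow> 'a set" where
  "uball v a b = {c. val_ge v (a - c) (a - b)}"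

definition spherically_complete :: "('a::field \<Rightarrow> 'g::linorder) \<Rightarrow> bool" where
  "spherically_complete v \<longleftrightarrow>
     (\<forall>N. N \<noteq> {} \<longrightarrow> N \<subseteq> {uball v a b | a b. True} \<longrightarrow>
          (\<forall>X\<in>N. \<forall>Y\<in>N. X \<subseteq> Y \<or> Y \<subseteq> X) \<longrightarrow> \<Inter>N \<noteq> {})"

end

theory Submission
  imports Defs
begin

text \<open>For b not in the image of D, an element c is an approximate solution of D x = b
with error D c - b, and the ball around c of radius v (D c - b) contains every better
approximation. These balls are nested along their members. Surjectivity of the induced
map on the residue field lets every approximate solution c be improved to one whose ball
lies inside that of c but misses c. A maximal nest of such balls has a common point
by spherical completeness, and improving that point enlarges the nest, a contradiction.\<close>

context
  fixes v :: "'a::field \<Rightarrow> 'g::linordered_ab_group_add"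
  assumes val: "valuation v"
begin

lemma val_mult: "a \<noteq> 0 \<Longrightarrow> b \<noteq> 0 \<Longrightarrow> v (a * b) = v a + v b"
  using val unfolding valuation_def by blast

lemma val_add_min: "a \<noteq> 0 \<Longrightarrow> b \<noteq> 0 \<Longrightarrow> a + b \<noteq> 0 \<Longrightarrow> min (v a) (v b) \<le> v (a + b)"
  using val unfolding valuation_def by blast

lemma val_one: "v 1 = 0"
  using val_mult[of 1 1] by simp

lemma val_minus_one: "v (-1) = 0"
proof -
  have "v (-1) + v (-1) = 0"
    using val_mult[of "-1" "-1"] val_one by simp
  then show ?thesis
    by (metis add_neg_neg add_pos_pos less_irrefl neqE)
qed

lemma val_uminus: "x \<noteq> 0 \<Longrightarrow> v (- x) = v x"
  using val_mult[of "-1" x] val_minus_one by simp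

lemma val_ge_refl: "val_ge v a a"
  unfolding val_ge_def by auto

lemma val_ge_trans: "val_ge v a b \<Longrightarrow> val_ge v b c \<Longrightarrow> val_ge v a c"
  unfolding val_ge_def by auto

lemma val_gt_ge_trans: "val_gt v a b \<Longrightarrow> val_ge v b c \<Longrightarrow> val_gt v a c"
  unfolding val_ge_def val_gt_def by auto

lemma val_ge_gt_trans: "val_ge v a b \<Longrightarrow> val_gt v b c \<Longrightarrow> val_gt v a c"
  unfolding val_ge_def val_gt_def by auto

lemma val_gt_irrefl: "\<not> val_gt v a a"
  unfolding val_gt_def by auto

lemma val_ge_add: "val_ge v x c \<Longrightarrow> val_ge v y c \<Longrightarrow> val_ge v (x + y) c"
  unfolding val_ge_def using val_add_min[of x y]
  by (cases "x = 0"; cases "y = 0"; cases "x + y = 0") (auto, metis min.bounded_iff order_trans)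

lemma val_gt_add: "val_gt v x c \<Longrightarrow> val_gt v y c \<Longrightarrow> val_gt v (x + y) c"
  unfolding val_gt_def using val_add_min[of x y]
  by (cases "x = 0"; cases "y = 0"; cases "x + y = 0") (auto, metis min_less_iff_conj less_le_trans)

lemma val_ge_uminus_iff: "val_ge v (- a) (- b) \<longleftrightarrow> val_ge v a b"
  unfolding val_ge_def using val_uminus[of a] val_uminus[of b] by (cases "a = 0") auto

lemma val_ge_uminus_left: "val_ge v a b \<Longrightarrow> val_ge v (- a) b"
  unfolding val_ge_def using val_uminus[of a] by auto

lemma val_gt_uminus_left: "val_gt v a b \<Longrightarrow> val_gt v (- a) b"
  unfolding val_gt_def using val_uminus[of a] by (cases "a = 0") auto

lemma val_gt_mult_maximal_ideal: "val_gt v s 1 \<Longrightarrow> t \<noteq> 0 \<Longrightarrow> val_gt v (t * s) t"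
  unfolding val_gt_def using val_mult[of t s] val_one
  by (cases "s = 0") (auto simp: add_strict_increasing2)

lemma val_gt_mult_val_ring: "val_ge v a 1 \<Longrightarrow> val_gt v d t \<Longrightarrow> val_gt v (a * d) t"
  unfolding val_gt_def val_ge_def using val_mult[of a d] val_one
  by (cases "a = 0"; cases "d = 0") (auto simp: add_strict_increasing2)

lemma val_ge_mult_val_ring: "val_ge v a 1 \<Longrightarrow> val_ge v (t * a) t"
  unfolding val_ge_def using val_mult[of t a] val_one by auto

lemma val_ring_mult: "val_ge v a 1 \<Longrightarrow> val_ge v b 1 \<Longrightarrow> val_ge v (a * b) 1"
  unfolding val_ge_def using val_mult[of a b] val_one by (cases "b = 0"; cases "a = 0") auto

end

lemma VD_fieldD:
  assumes "VD_field v D"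
  shows "valuation v" "\<And>a b. D (a + b) = D a + D b" "\<And>a. val_ge v (D a) a"
    "v ` {a. a \<noteq> 0} = v ` {a. a \<noteq> 0 \<and> val_gt v (D a) a}"
    "\<exists>e \<in> val_ring v. \<forall>a b. D (a * b) = a * D b + b * D a + e * D a * D b"
  using assms unfolding VD_field_def by blast+

lemma additive_diff:
  fixes D :: "'a::ab_group_add \<Rightarrow> 'a"
  assumes "\<And>a b. D (a + b) = D a + D b"
  shows "D (a - b) = D a - D b"
  using assms[of "a - b" b] by (simp add: eq_diff_eq)

text \<open>Choose t with v t = v y and v (D t) > v t, lift y / t to a residue preimage a
under D, and take x = t a: the twisted Leibniz rule gives
D x - y = t (D a - y / t) + a D t + e D a D t, and each summand has value > v y.\<close>

lemma VD_field_approximate_preimage: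
  fixes v :: "'a::field \<Rightarrow> 'g::linordered_ab_group_add"
  assumes vd: "VD_field v D" and rs: "residue_D_surj v D" and y: "y \<noteq> 0"
  shows "\<exists>x. val_ge v x y \<and> val_gt v (D x - y) y"
proof -
  note VD = VD_fieldD[OF vd]
  have val: "valuation v" by (rule VD(1))
  have "v y \<in> v ` {a. a \<noteq> 0 \<and> val_gt v (D a) a}"
    using VD(4) y by blast
  then obtain t where t: "t \<noteq> 0" "v t = v y" "val_gt v (D t) t" by auto
  obtain e where e: "e \<in> val_ring v" and leibniz: "\<And>a b. D (a * b) = a * D b + b * D a + e * D a * D b"
    using VD(5) by blast
  define w where "w = y / t"
  have w0: "w \<noteq> 0" and tw: "t * w = y"
    using y t by (simp_all add: w_def)
  have "v w = 0"
    using val_mult[OF val t(1) w0] tw t(2) by simp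
  then have "w \<in> val_ring v"
    unfolding val_ring_def val_ge_def using w0 val_one[OF val] by simp
  then obtain a where a: "val_ge v a 1" and Da: "val_gt v (D a - w) 1"
    using rs unfolding residue_D_surj_def val_ring_def same_residue_def by auto
  have eO: "val_ge v e 1" using e unfolding val_ring_def by simp
  have DaO: "val_ge v (D a) 1" using val_ge_trans[OF val VD(3) a] .
  have ty: "val_ge v t y" unfolding val_ge_def using t y by simp
  have "D (t * a) - y = t * (D a - w) + a * D t + (e * D a) * D t"
    using leibniz tw by (simp add: algebra_simps)
  also have "val_gt v \<dots> t"
    by (intro val_gt_add[OF val] val_gt_mult_maximal_ideal[OF val Da t(1)]
        val_gt_mult_val_ring[OF val a t(3)] val_gt_mult_val_ring[OF val val_ring_mult[OF val eO DaO] t(3)])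
  finally have "val_gt v (D (t * a) - y) y"
    using val_gt_ge_trans[OF val _ ty] by blast
  moreover have "val_ge v (t * a) y"
    using val_ge_trans[OF val val_ge_mult_val_ring[OF val a] ty] .
  ultimately show ?thesis by blast
qed

text \<open>Hausdorff's maximal principle on the family of balls B c: a maximal nest has a
common point z, and a ball B c below B z that missed z could be added to the nest.\<close>

lemma spherically_complete_ex_center:
  fixes v :: "'a::field \<Rightarrow> 'g::linorder" and B :: "'a \<Rightarrow> 'a set"
  assumes sc: "spherically_complete v"
    and balls: "\<And>c. B c \<in> {uball v a b | a b. True}"
    and nested: "\<And>z c. z \<in> B c \<Longrightarrow> B z \<subseteq> B c"
  shows "\<exists>z. \<forall>c. B c \<subseteq> B z \<longrightarrow> z \<in> B c"
proof (rule ccontr)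
  assume "\<not> ?thesis"
  then have shrink: "\<exists>c. B c \<subseteq> B z \<and> z \<notin> B c" for z by blast
  obtain M where M: "subset.maxchain (range B) M"
    using subset.Hausdorff by blast
  then have M_sub: "M \<subseteq> range B" and M_chain: "\<forall>X\<in>M. \<forall>Y\<in>M. X \<subseteq> Y \<or> Y \<subseteq> X"
    unfolding subset.maxchain_def subset.chain_def by auto
  have "M \<noteq> {}"
  proof
    assume "M = {}"
    moreover have "subset.chain (range B) {B undefined}"
      unfolding subset.chain_def by auto
    ultimately show False using M unfolding subset.maxchain_def by blast
  qed
  moreover have "M \<subseteq> {uball v a b | a b. True}"
  proof
    fix X assume "X \<in> M"
    then obtain c where "X = B c" using M_sub by auto
    then show "X \<in> {uball v a b | a b. True}" using balls by simp
  qed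
  ultimately have "\<Inter>M \<noteq> {}"
    using sc M_chain unfolding spherically_complete_def by blast
  then obtain z where z: "z \<in> \<Inter>M" by blast
  obtain c where c: "B c \<subseteq> B z" "z \<notin> B c"
    using shrink by blast
  have below: "\<forall>X\<in>M. B c \<subseteq> X"
  proof
    fix X assume "X \<in> M"
    obtain c' where "X = B c'" using \<open>X \<in> M\<close> M_sub by auto
    moreover have "z \<in> X" using z \<open>X \<in> M\<close> by blast
    ultimately show "B c \<subseteq> X" using nested c(1) by blast
  qed
  then have "subset.chain (range B) (insert (B c) M)"
    using M_sub M_chain unfolding subset.chain_def by (simp add: ball_simps) blast
  moreover have "B c \<notin> M"
    using z c(2) by blast
  ultimately show False
    using M unfolding subset.maxchain_def by blast
qed

lemma mem_uball_error_iff: "z \<in> uball v c (c - D c + b) \<longleftrightarrow> val_ge v (c - z) (D c - b)"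
  unfolding uball_def by simp

lemma VD_field_error_balls_nested:
  fixes v :: "'a::field \<Rightarrow> 'g::linordered_ab_group_add"
  assumes vd: "VD_field v D" and z: "z \<in> uball v c (c - D c + b)"
  shows "uball v z (z - D z + b) \<subseteq> uball v c (c - D c + b)"
proof
  note VD = VD_fieldD[OF vd]
  have val: "valuation v" by (rule VD(1))
  fix w assume "w \<in> uball v z (z - D z + b)"
  then have zw: "val_ge v (z - w) (D z - b)" by (simp add: mem_uball_error_iff)
  have cz: "val_ge v (c - z) (D c - b)" using z by (simp add: mem_uball_error_iff)
  have "D z - b = (D c - b) + - D (c - z)"
    by (simp add: additive_diff[OF VD(2)])
  moreover have "val_ge v ((D c - b) + - D (c - z)) (D c - b)"
    by (intro val_ge_add[OF val] val_ge_refl[OF val] val_ge_uminus_left[OF val]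
        val_ge_trans[OF val VD(3) cz])
  ultimately have "val_ge v (z - w) (D c - b)"
    using val_ge_trans[OF val zw] by metis
  then have "val_ge v ((c - z) + (z - w)) (D c - b)"
    by (intro val_ge_add[OF val] cz)
  then show "w \<in> uball v c (c - D c + b)"
    by (simp add: mem_uball_error_iff)
qed

lemma VD_field_error_ball_shrinks:
  fixes v :: "'a::field \<Rightarrow> 'g::linordered_ab_group_add"
  assumes vd: "VD_field v D" and rs: "residue_D_surj v D" and Dz: "D z \<noteq> b"
  shows "\<exists>c. uball v c (c - D c + b) \<subseteq> uball v z (z - D z + b) \<and> z \<notin> uball v c (c - D c + b)"
proof -
  note VD = VD_fieldD[OF vd]
  have val: "valuation v" by (rule VD(1))
  define y where "y = b - D z"
  have "y \<noteq> 0" using Dz by (simp add: y_def)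
  then obtain x where x: "val_ge v x y" "val_gt v (D x - y) y"
    using VD_field_approximate_preimage[OF vd rs] by blast
  have "D (z + x) - b = D x - y" and "D z - b = - y"
    by (simp_all add: y_def VD(2))
  have "z + x \<in> uball v z (z - D z + b)"
    using x(1) \<open>D z - b = - y\<close> by (simp add: mem_uball_error_iff val_ge_uminus_iff[OF val])
  moreover have "z \<notin> uball v (z + x) (z + x - D (z + x) + b)"
  proof
    assume "z \<in> uball v (z + x) (z + x - D (z + x) + b)"
    then have "val_ge v x (D x - y)"
      using \<open>D (z + x) - b = D x - y\<close> by (simp add: mem_uball_error_iff)
    then have "val_gt v (D x) y"
      using val_ge_trans[OF val VD(3)] val_ge_gt_trans[OF val _ x(2)] by blast
    then have "val_gt v (D x + - (D x - y)) y"
      by (intro val_gt_add[OF val] val_gt_uminus_left[OF val] x(2))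
    then show False using val_gt_irrefl[OF val] by simp
  qed
  ultimately show ?thesis
    using VD_field_error_balls_nested[OF vd] by blast
qed

theorem theorem49:
  fixes v :: "'a::field \<Rightarrow> 'g::linordered_ab_group_add" and D :: "'a \<Rightarrow> 'a"
  assumes "VD_field v D"
    and "spherically_complete v"
    and "residue_D_surj v D"
  shows "surj D"
proof (rule ccontr)
  assume "\<not> surj D"
  then obtain b where b: "\<And>c. D c \<noteq> b" by (metis surjI)
  obtain z where z: "\<And>c. uball v c (c - D c + b) \<subseteq> uball v z (z - D z + b) \<Longrightarrow> z \<in> uball v c (c - D c + b)"
    using spherically_complete_ex_center[OF assms(2), of "\<lambda>c. uball v c (c - D c + b)"]
      VD_field_error_balls_nested[OF assms(1)] by blast
  then show False
    using VD_field_error_ball_shrinks[OF assms(1) assms(3) b] by blast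
qed

end
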